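(* For each integer $d \ge 4$, one has $\mathrm{rc}_\ell(\Delta_d) \ge \log_2 \log_2 d$, where $\Delta_d = \{0,e_1,\dots,e_d\} \subseteq \mathbb{Z}^d$.
   Context: For $X, Y \subseteq \mathbb{Z}^d$, $\mathrm{rc}(X,Y)$ is the smallest number of inequalities in a linear system $Ax \le b$ satisfied by all points of $X$ and such that each point of $Y\setminus X$ violates at least one inequality. With $B_t = [-t,t]^d\cap\mathbb{Z}^d$, $\mathrm{rc}_\ell(X) = \max_{t\in\mathbb{Z}_{>0}} \mathrm{rc}(X,B_t)$. $e_i$ denotes the $i$-th standard unit vector. *)

theory Defs
  imports "HOL-Analysis.Analysis" "HOL-Library.Extended_Real"
begin

definition sat_ineq :: "(real^'n) \<times> real \<Rightarrow> int^'n \<Rightarrow> bool" where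
  "sat_ineq ab x \<longleftrightarrow> (\<Sum>i\<in>UNIV. fst ab $ i * of_int (x $ i)) \<le> snd ab"

definition is_rel_system :: "(int^'n) set \<Rightarrow> (int^'n) set \<Rightarrow> ((real^'n) \<times> real) set \<Rightarrow> bool" where
  "is_rel_system X Y S \<longleftrightarrow> finite S \<and> (\<forall>x\<in>X. \<forall>ab\<in>S. sat_ineq ab x)
     \<and> (\<forall>y\<in>Y - X. \<exists>ab\<in>S. \<not> sat_ineq ab y)"

text \<open>rc(X,Y): minimal number of inequalities (infinite if no such system exists).\<close>
definition rc :: "(int^'n) set \<Rightarrow> (int^'n) set \<Rightarrow> enat" where
  "rc X Y = (INF S \<in> {S. is_rel_system X Y S}. enat (card S))"

definition box :: "int \<Rightarrow> (int^'n) set" where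
  "box t = {x. \<forall>i. \<bar>x $ i\<bar> \<le> t}"

definition rc_l :: "(int^'n) set \<Rightarrow> enat" where
  "rc_l X = (SUP t \<in> {t::int. t > 0}. rc X (box t))"

definition unit_simplex :: "(int^'n) set" where
  "unit_simplex = insert 0 {axis i 1 | i. True}"

end

theory Submission
  imports Defs
begin

(* A valid inequality a x <= b for Delta_d has b >= 0 and a_i <= b for all i, so it is also
   satisfied by the point e_i + e_j - e_k of [-1,1]^d \ Delta_d whenever a_i <= a_k or a_j <= a_k.
   Applying the Erdos-Szekeres theorem once per inequality of a system of size s, any
   2^2^s + 1 coordinates contain i < k < j on which every coefficient sequence is monotone;
   then a_k lies between a_i and a_j for each inequality and e_i + e_j - e_k is not cut off.
   Hence d <= 2^2^s. *)

definition up_chains :: "'a::linorder set \<Rightarrow> ('a \<Rightarrow> 'b::order) \<Rightarrow> 'a \<Rightarrow> 'a set set" where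
  "up_chains T f p = {U. U \<subseteq> T \<inter> {..p} \<and> p \<in> U \<and> mono_on U f}"

definition longest_up_chain :: "'a::linorder set \<Rightarrow> ('a \<Rightarrow> 'b::order) \<Rightarrow> 'a \<Rightarrow> nat" where
  "longest_up_chain T f p = Max (card ` up_chains T f p)"

lemma finite_up_chains: "finite T \<Longrightarrow> finite (up_chains T f p)"
  by (rule finite_subset[of _ "Pow T"]) (auto simp: up_chains_def)

lemma singleton_in_up_chains: "p \<in> T \<Longrightarrow> {p} \<in> up_chains T f p"
  by (auto simp: up_chains_def monotone_on_def)

lemma insert_in_up_chains:
  assumes "U \<in> up_chains T f p" "q \<in> T" "p < q" "f p \<le> f q"
  shows "insert q U \<in> up_chains T f q"
proof -
  have below: "u < q \<and> f u \<le> f q" if "u \<in> U" for u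
  proof -
    have "u \<le> p" "f u \<le> f p"
      using assms(1) that by (auto simp: up_chains_def monotone_on_def)
    then show ?thesis using assms(3,4) by (meson le_less_trans order_trans)
  qed
  then show ?thesis
    using assms(1,2) by (auto simp: up_chains_def monotone_on_def dest: below)
qed

lemma longest_up_chain_attained:
  assumes "finite T" "p \<in> T"
  obtains U where "U \<in> up_chains T f p" "card U = longest_up_chain T f p"
proof -
  have "longest_up_chain T f p \<in> card ` up_chains T f p"
    unfolding longest_up_chain_def
    using assms finite_up_chains singleton_in_up_chains by (intro Max_in) blast+
  then show ?thesis using that by force
qed

lemma longest_up_chain_ge: "finite T \<Longrightarrow> U \<in> up_chains T f p \<Longrightarrow> card U \<le> longest_up_chain T f p"
  unfolding longest_up_chain_def by (simp add: finite_up_chains)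

lemma longest_up_chain_less:
  assumes "finite T" "p \<in> T" "q \<in> T" "p < q" "f p \<le> f q"
  shows "longest_up_chain T f p < longest_up_chain T f q"
proof -
  obtain U where U: "U \<in> up_chains T f p" "card U = longest_up_chain T f p"
    using longest_up_chain_attained[OF assms(1,2)] by blast
  have "finite U" "q \<notin> U"
    using U(1) assms by (auto simp: up_chains_def intro: finite_subset)
  then have "card U < card (insert q U)" by simp
  also have "\<dots> \<le> longest_up_chain T f q"
    by (rule longest_up_chain_ge[OF assms(1) insert_in_up_chains[OF U(1) assms(3-5)]])
  finally show ?thesis using U(2) by simp
qed

theorem Erdos_Szekeres:
  fixes T :: "'a::linorder set" and f :: "'a \<Rightarrow> 'b::linorder"
  assumes "finite T" "m * m < card T"
  shows "\<exists>T'\<subseteq>T. m < card T' \<and> (mono_on T' f \<or> antimono_on T' f)"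
proof (rule ccontr)
  assume no_long: "\<not> ?thesis"
  let ?L = "longest_up_chain T f"
  have L_range: "?L p \<in> {1..m}" if p: "p \<in> T" for p
  proof -
    obtain U where U: "U \<in> up_chains T f p" "card U = ?L p"
      using longest_up_chain_attained[OF assms(1) p] by blast
    have "U \<subseteq> T" "mono_on U f" using U(1) by (auto simp: up_chains_def)
    then have "card U \<le> m" using no_long by (meson not_le)
    moreover have "1 \<le> ?L p"
      using longest_up_chain_ge[OF assms(1) singleton_in_up_chains[OF p]] by simp
    ultimately show ?thesis using U(2) by simp
  qed
  have level_small: "card {p\<in>T. ?L p = c} \<le> m" for c
  proof -
    have "f q \<le> f p" if "p \<in> T" "q \<in> T" "p \<le> q" "?L p = ?L q" for p q
    proof (rule ccontr)
      assume "\<not> f q \<le> f p"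
      then have "p < q" "f p \<le> f q" using that(3) by (auto simp: order.order_iff_strict)
      then have "?L p < ?L q" by (rule longest_up_chain_less[OF assms(1) that(1,2)])
      then show False using that(4) by simp
    qed
    then have "antimono_on {p\<in>T. ?L p = c} f"
      by (auto simp: monotone_on_def)
    moreover have "{p\<in>T. ?L p = c} \<subseteq> T" by blast
    ultimately show ?thesis using no_long by (meson not_le)
  qed
  have "T = (\<Union>c\<in>{1..m}. {p\<in>T. ?L p = c})" using L_range by blast
  then have "card T \<le> (\<Sum>c\<in>{1..m}. card {p\<in>T. ?L p = c})"
    by (metis card_UN_le finite_atLeastAtMost)
  also have "\<dots> \<le> m * m" using sum_bounded_above[of "{1..m}", OF level_small] by simp
  finally show False using assms(2) by simp
qed

lemma Erdos_Szekeres_family: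
  fixes F :: "('a::linorder \<Rightarrow> 'b::linorder) set"
  assumes "finite F" "finite T" "m ^ 2 ^ card F < card T"
  shows "\<exists>T'\<subseteq>T. m < card T' \<and> (\<forall>f\<in>F. mono_on T' f \<or> antimono_on T' f)"
  using assms
proof (induction F arbitrary: T rule: finite_induct)
  case empty
  then show ?case by auto
next
  case (insert f F)
  let ?M = "m ^ 2 ^ card F"
  have "?M * ?M < card T"
    using insert by (simp add: mult_2 power_add)
  then obtain T1 where T1: "T1 \<subseteq> T" "?M < card T1" "mono_on T1 f \<or> antimono_on T1 f"
    using Erdos_Szekeres[OF insert.prems(1)] by blast
  moreover obtain T2 where "T2 \<subseteq> T1" "m < card T2" "\<forall>g\<in>F. mono_on T2 g \<or> antimono_on T2 g"
    using insert.IH[OF finite_subset[OF T1(1) insert.prems(1)] T1(2)] by blast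
  ultimately show ?case by (intro exI[of _ T2]) (auto intro: monotone_on_subset)
qed

lemma card_gt_2_obtain_ordered_triple:
  fixes A :: "'a::linorder set"
  assumes "finite A" "2 < card A"
  obtains i k j where "i \<in> A" "k \<in> A" "j \<in> A" "i < k" "k < j"
proof -
  have "A \<noteq> {}" using assms(2) by auto
  have "card {Min A, Max A} \<le> 2" by (simp add: card_insert_if)
  then have "\<not> A \<subseteq> {Min A, Max A}"
    using card_mono[of "{Min A, Max A}" A] assms(2) by auto
  then obtain k where k: "k \<in> A" "k \<noteq> Min A" "k \<noteq> Max A" by blast
  have "Min A < k" "k < Max A"
    using k Min_le[OF assms(1) k(1)] Max_ge[OF assms(1) k(1)] by auto
  then show ?thesis
    using that k(1) Min_in Max_in assms(1) \<open>A \<noteq> {}\<close> by blast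
qed

lemma sum_mult_axis: "(\<Sum>p\<in>UNIV. a $ p * of_int (axis i (1::int) $ p)) = a $ i"
proof -
  have "(\<Sum>p\<in>UNIV. a $ p * of_int (axis i (1::int) $ p)) = (\<Sum>p\<in>UNIV. if p = i then a $ p else 0)"
    by (intro sum.cong) (auto simp: axis_def)
  then show ?thesis by simp
qed

lemma sat_ineq_zero: "sat_ineq (a, b) 0 \<longleftrightarrow> 0 \<le> b"
  by (simp add: sat_ineq_def)

lemma sat_ineq_axis: "sat_ineq (a, b) (axis i 1) \<longleftrightarrow> a $ i \<le> b"
  by (simp add: sat_ineq_def sum_mult_axis)

lemma sat_ineq_unit_simplex_iff:
  "(\<forall>x\<in>unit_simplex. sat_ineq (a, b) x) \<longleftrightarrow> 0 \<le> b \<and> (\<forall>i. a $ i \<le> b)"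
  by (auto simp: unit_simplex_def sat_ineq_axis sat_ineq_zero)

lemma sat_ineq_axis_comb:
  "sat_ineq (a, b) (axis i 1 + axis j 1 - axis k 1) \<longleftrightarrow> a $ i + a $ j - a $ k \<le> b"
  by (simp add: sat_ineq_def sum.distrib sum_subtractf algebra_simps sum_mult_axis)

lemma axis_comb_in_box_diff_unit_simplex:
  assumes "i \<noteq> j" "i \<noteq> k" "j \<noteq> k"
  shows "axis i 1 + axis j 1 - axis k 1 \<in> box 1 - unit_simplex"
proof -
  let ?x = "axis i 1 + axis j 1 - axis k (1::int)"
  have "\<bar>?x $ p\<bar> \<le> 1" for p using assms by (simp add: axis_def)
  moreover have "0 \<le> y $ k" if "y \<in> unit_simplex" for y
    using that by (auto simp: unit_simplex_def axis_def)
  moreover have "?x $ k = -1" using assms by (simp add: axis_def)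
  ultimately show ?thesis by (force simp: box_def)
qed

lemma rel_system_unit_simplex_card_le:
  assumes "is_rel_system (unit_simplex :: (int^'n::finite) set) (box 1) S"
  shows "CARD('n) \<le> 2 ^ 2 ^ card S"
proof (rule ccontr)
  assume too_many: "\<not> ?thesis"
  define F where "F = (\<lambda>(a, b) k. a $ (from_nat k :: 'n)) ` S"
  have "finite S" using assms by (simp add: is_rel_system_def)
  then have "finite F" "card F \<le> card S" by (simp_all add: F_def card_image_le)
  then have "(2::nat) ^ 2 ^ card F \<le> 2 ^ 2 ^ card S" by simp
  moreover have "card (range (to_nat :: 'n \<Rightarrow> nat)) = CARD('n)" by (simp add: card_image)
  ultimately have "2 ^ 2 ^ card F < card (range (to_nat :: 'n \<Rightarrow> nat))"
    using too_many by linarith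
  moreover have fin: "finite (range (to_nat :: 'n \<Rightarrow> nat))" by simp
  ultimately obtain T where T: "T \<subseteq> range (to_nat :: 'n \<Rightarrow> nat)" "2 < card T"
      "\<forall>f\<in>F. mono_on T f \<or> antimono_on T f"
    using Erdos_Szekeres_family[OF \<open>finite F\<close> fin] by blast
  then obtain i k j where ikj: "i \<in> T" "k \<in> T" "j \<in> T" "i < k" "k < j"
    using card_gt_2_obtain_ordered_triple[OF finite_subset[OF T(1) fin] T(2)] by blast
  then obtain I K J :: 'n where IKJ: "i = to_nat I" "k = to_nat K" "j = to_nat J"
    using T(1) by blast
  let ?x = "axis I 1 + axis J 1 - axis K (1::int)"
  have "?x \<in> box 1 - unit_simplex"
    using ikj(4,5) IKJ by (intro axis_comb_in_box_diff_unit_simplex) auto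
  then obtain ab where "ab \<in> S" "\<not> sat_ineq ab ?x"
    using assms unfolding is_rel_system_def by blast
  then obtain a b where ab: "(a, b) \<in> S" "\<not> sat_ineq (a, b) ?x"
    by (cases ab) blast
  have "\<forall>y\<in>unit_simplex. sat_ineq (a, b) y"
    using assms ab(1) unfolding is_rel_system_def by blast
  then have "0 \<le> b" "a $ I \<le> b" "a $ J \<le> b"
    unfolding sat_ineq_unit_simplex_iff by auto
  moreover have "(\<lambda>k. a $ from_nat k) \<in> F"
    unfolding F_def using ab(1) by (rule rev_image_eqI) simp
  then have "mono_on T (\<lambda>k. a $ from_nat k) \<or> antimono_on T (\<lambda>k. a $ from_nat k)"
    using T(3) by blast
  then have "a $ I \<le> a $ K \<or> a $ J \<le> a $ K"
  proof
    assume "mono_on T (\<lambda>k. a $ from_nat k)"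
    from monotone_onD[OF this ikj(1,2)] show ?thesis using ikj(4) IKJ by simp
  next
    assume "antimono_on T (\<lambda>k. a $ from_nat k)"
    from monotone_onD[OF this ikj(2,3)] show ?thesis using ikj(5) IKJ by simp
  qed
  ultimately have "sat_ineq (a, b) ?x" unfolding sat_ineq_axis_comb by linarith
  then show False using ab(2) by blast
qed

lemma log2_log2_le:
  fixes d :: real
  assumes "1 < d" "d \<le> 2 ^ 2 ^ k"
  shows "log 2 (log 2 d) \<le> k"
proof -
  have "log 2 d \<le> 2 ^ k"
    using assms log_le_cancel_iff[of 2 d "2 ^ 2 ^ k"] by (simp add: log_pow_cancel)
  moreover have "0 < log 2 d" using assms(1) by simp
  ultimately show ?thesis
    using log_le_cancel_iff[of 2 "log 2 d" "2 ^ k"] by (simp add: log_pow_cancel)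
qed

lemma enat_le_rc: "(\<And>S. is_rel_system X Y S \<Longrightarrow> n \<le> card S) \<Longrightarrow> enat n \<le> rc X Y"
  unfolding rc_def by (auto intro: INF_greatest)

lemma rc_box_le_rc_l: "0 < t \<Longrightarrow> rc X (box t) \<le> rc_l X"
  unfolding rc_l_def by (rule SUP_upper) simp

theorem theorem3p6:
  assumes "CARD('n::finite) \<ge> 4"
  shows "ereal (log 2 (log 2 (real CARD('n)))) \<le> ereal_of_enat (rc_l (unit_simplex :: (int^'n) set))"
proof -
  let ?d = "real CARD('n)"
  define N where "N = nat \<lceil>log 2 (log 2 ?d)\<rceil>"
  have "enat N \<le> rc (unit_simplex :: (int^'n) set) (box 1)"
  proof (rule enat_le_rc)
    fix S assume "is_rel_system (unit_simplex :: (int^'n) set) (box 1) S"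
    then have "?d \<le> 2 ^ 2 ^ card S"
      using rel_system_unit_simplex_card_le of_nat_mono by fastforce
    then have "log 2 (log 2 ?d) \<le> card S" using assms by (intro log2_log2_le) auto
    then show "N \<le> card S" by (simp add: N_def nat_le_iff ceiling_le)
  qed
  also have "\<dots> \<le> rc_l (unit_simplex :: (int^'n) set)" by (rule rc_box_le_rc_l) simp
  finally have rc_l_ge: "enat N \<le> rc_l (unit_simplex :: (int^'n) set)" .
  have "ereal (log 2 (log 2 ?d)) \<le> ereal_of_enat (enat N)"
    unfolding N_def by simp linarith
  also have "\<dots> \<le> ereal_of_enat (rc_l (unit_simplex :: (int^'n) set))"
    using rc_l_ge by (simp only: ereal_of_enat_le_iff)
  finally show ?thesis .
qed

end
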